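(* Let $\alpha$ be a nonzero real number. Let $\gamma(t)=\Psi(u(t),v(t))$ be an $\alpha$-stationary curve in $\mathbb S^2$ which is not of constant curvature, parametrized by arc length $t$ and not passing through $N$. Then there is a constant $c>0$ such that, expressing $t$ and $v$ as functions of $u$, $$t(u)=\pm\int^u\frac{s^\alpha\sin(s)}{\sqrt{s^{2\alpha}\sin^2(s)-c^2}}\,ds,\qquad v(u)=\pm\int^u\frac{c}{\sin(s)\sqrt{s^{2\alpha}\sin^2(s)-c^2}}\,ds.$$
   Context: $\mathbb S^2\subset\mathbb R^3$ is the unit sphere with the Euclidean metric. It is parametrized by $\Psi(u,v)=(\sin u\cos v,\sin u\sin v,\cos u)$, and $N=(0,0,1)$. The spherical distance from $\Psi(u,v)$ to $N$ is $u\in(0,\pi)$, and the line element is $\sqrt{u'^2+\sin^2(u)v'^2}\,dt$. The energy is $$E_\alpha[\gamma]=\int u^\alpha\sqrt{u'^2+\sin^2(u)v'^2}\,dt.$$ An $\alpha$-stationary curve is a critical point of $E_\alpha$, i.e. $(u,v)$ satisfies its Euler–Lagrange equations. Equivalently, $\kappa=\alpha\langle\mathbf n,\xi\rangle/u$, with $\mathbf n=(\gamma'\times\gamma)/|\gamma'|$, $\kappa=\langle\gamma'',\mathbf n\rangle/|\gamma'|^2$, and $\xi=\Psi_u$. Throughout the paper, $\alpha\ne0$ and curves avoid $N$. Integrals $\int^u$ are indefinite. *)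

theory Defs
  imports "HOL-Analysis.Analysis"
begin

definition Psi :: "real \<Rightarrow> real \<Rightarrow> real^3" where
  "Psi u v = vector [sin u * cos v, sin u * sin v, cos u]"

definition speed :: "(real \<Rightarrow> real) \<Rightarrow> (real \<Rightarrow> real) \<Rightarrow> real \<Rightarrow> real" where
  "speed u v t = sqrt ((deriv u t)\<^sup>2 + (sin (u t))\<^sup>2 * (deriv v t)\<^sup>2)"

text \<open>alpha-stationary on the open parameter interval I: the Euler--Lagrange equations of
  the Lagrangian L = u^alpha sqrt(u'^2 + sin^2(u) v'^2) hold at every parameter in I.\<close>
definition alpha_stationary ::
  "real \<Rightarrow> real set \<Rightarrow> (real \<Rightarrow> real) \<Rightarrow> (real \<Rightarrow> real) \<Rightarrow> bool" where
  "alpha_stationary \<alpha> I u v \<longleftrightarrow>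
     (\<forall>t\<in>I.
        ((\<lambda>s. u s powr \<alpha> * deriv u s / speed u v s) has_real_derivative
            (\<alpha> * u t powr (\<alpha> - 1) * speed u v t
             + u t powr \<alpha> * sin (u t) * cos (u t) * (deriv v t)\<^sup>2 / speed u v t)) (at t)
      \<and> ((\<lambda>s. u s powr \<alpha> * (sin (u s))\<^sup>2 * deriv v s / speed u v s) has_real_derivative 0) (at t))"

definition curve :: "(real \<Rightarrow> real) \<Rightarrow> (real \<Rightarrow> real) \<Rightarrow> real \<Rightarrow> real^3" where
  "curve u v t = Psi (u t) (v t)"

definition curvature :: "(real \<Rightarrow> real) \<Rightarrow> (real \<Rightarrow> real) \<Rightarrow> real \<Rightarrow> real" where
  "curvature u v t =
     (let g1 = (\<lambda>s. vector_derivative (curve u v) (at s));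
          g2 = vector_derivative g1 (at t);
          n = (1 / norm (g1 t)) *\<^sub>R cross3 (g1 t) (curve u v t)
      in (g2 \<bullet> n) / (norm (g1 t))\<^sup>2)"

end

theory Submission imports Defs begin

text \<open>The longitude v is a cyclic coordinate of the Lagrangian, so the second Euler--Lagrange
  equation is Clairaut's first integral: along an arc-length parametrization
  u^alpha sin(u)^2 v' = c0 is constant. If c0 = 0 then v is constant and the curve runs along a
  meridian, a great circle of curvature 0, which is excluded; hence c0 is nonzero. Eliminating v'
  from u'^2 + sin(u)^2 v'^2 = 1 gives u'^2 = (u^(2 alpha) sin(u)^2 - c0^2) / (u^(2 alpha) sin(u)^2),
  and on every piece where u' does not vanish, t(u) and v(t(u)) have the stated derivatives by
  the inverse function rule and the chain rule.\<close>

lemma Psi_eq_meridian: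
  "Psi x w = sin x *\<^sub>R vector [cos w, sin w, 0] + cos x *\<^sub>R (vector [0, 0, 1] :: real^3)"
  unfolding Psi_def by (simp add: vec_eq_iff forall_3 vector_3)

lemma curvature_eq_0_if_longitude_const:
  assumes I: "open I" "t \<in> I" and v_const: "\<And>s. s \<in> I \<Longrightarrow> v s = v0"
    and u_diff: "\<And>s. s \<in> I \<Longrightarrow> u differentiable (at s)"
    and u'_diff: "deriv u differentiable (at t)"
  shows "curvature u v t = 0"
proof -
  define A :: "real^3" where "A = vector [cos v0, sin v0, 0]"
  define B :: "real^3" where "B = vector [0, 0, 1]"
  define P where "P = (\<lambda>x. sin x *\<^sub>R A + cos x *\<^sub>R B)"
  define P' where "P' = (\<lambda>x. cos x *\<^sub>R A - sin x *\<^sub>R B)"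
  have curve_eq: "curve u v s = P (u s)" if "s \<in> I" for s
    using v_const[OF that] by (simp add: curve_def Psi_eq_meridian P_def A_def B_def)
  have velocity: "vector_derivative (curve u v) (at s) = deriv u s *\<^sub>R P' (u s)"
    if s: "s \<in> I" for s
  proof -
    have "(u has_real_derivative deriv u s) (at s)"
      using u_diff[OF s] DERIV_deriv_iff_real_differentiable by blast
    then have "((\<lambda>s. P (u s)) has_vector_derivative deriv u s *\<^sub>R P' (u s)) (at s)"
      unfolding P_def P'_def by (auto intro!: derivative_eq_intros simp: algebra_simps)
    then have "(curve u v has_vector_derivative deriv u s *\<^sub>R P' (u s)) (at s)"
      by (rule has_vector_derivative_transform_within_open[OF _ I(1) s]) (simp add: curve_eq)
    then show ?thesis by (rule vector_derivative_at)
  qed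
  have "(u has_real_derivative deriv u t) (at t)"
    using u_diff[OF I(2)] DERIV_deriv_iff_real_differentiable by blast
  moreover have "(deriv u has_real_derivative deriv (deriv u) t) (at t)"
    using u'_diff DERIV_deriv_iff_real_differentiable by blast
  ultimately have "((\<lambda>s. deriv u s *\<^sub>R P' (u s)) has_vector_derivative
      deriv (deriv u) t *\<^sub>R P' (u t) - (deriv u t)\<^sup>2 *\<^sub>R P (u t)) (at t)"
    unfolding P_def P'_def
    by (auto intro!: derivative_eq_intros simp: algebra_simps power2_eq_square)
  then have "((\<lambda>s. vector_derivative (curve u v) (at s)) has_vector_derivative
      deriv (deriv u) t *\<^sub>R P' (u t) - (deriv u t)\<^sup>2 *\<^sub>R P (u t)) (at t)"
    by (rule has_vector_derivative_transform_within_open[OF _ I]) (simp add: velocity)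
  then have acceleration:
    "vector_derivative (\<lambda>s. vector_derivative (curve u v) (at s)) (at t) =
      deriv (deriv u) t *\<^sub>R P' (u t) - (deriv u t)\<^sup>2 *\<^sub>R P (u t)"
    by (rule vector_derivative_at)
  txt \<open>Velocity, acceleration and position all lie in the plane spanned by A and B,
    so the normal (velocity \<times> position) is orthogonal to the acceleration.\<close>
  show ?thesis
    unfolding curvature_def Let_def acceleration velocity[OF I(2)] curve_eq[OF I(2)]
    by (simp add: cross_mult_left inner_diff_left dot_cross_self)
qed

lemma alpha_stationary_first_integral:
  assumes "alpha_stationary \<alpha> I u v" "is_interval I"
  obtains c0 where "\<And>s. s \<in> I \<Longrightarrow> u s powr \<alpha> * (sin (u s))\<^sup>2 * deriv v s / speed u v s = c0"
proof -
  have "((\<lambda>s. u s powr \<alpha> * (sin (u s))\<^sup>2 * deriv v s / speed u v s) has_real_derivative 0)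
      (at s within I)" if "s \<in> I" for s
    using assms(1) that has_field_derivative_at_within unfolding alpha_stationary_def by blast
  then show ?thesis
    using has_field_derivative_zero_constant[OF is_interval_convex[OF assms(2)]] that by blast
qed

lemma curvature_eq_0_if_clairaut_constant_eq_0:
  assumes I: "open I" "is_interval I" "t \<in> I"
    and u_C2: "\<And>s. s \<in> I \<Longrightarrow> u differentiable (at s) \<and> deriv u differentiable (at s)"
    and v_diff: "\<And>s. s \<in> I \<Longrightarrow> v differentiable (at s)"
    and colatitude: "\<And>s. s \<in> I \<Longrightarrow> 0 < u s \<and> u s < pi"
    and clairaut: "\<And>s. s \<in> I \<Longrightarrow> u s powr \<alpha> * (sin (u s))\<^sup>2 * deriv v s = 0"
  shows "curvature u v t = 0"
proof -
  have "(v has_real_derivative 0) (at s within I)" if s: "s \<in> I" for s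
  proof -
    have "0 < u s powr \<alpha>" "0 < sin (u s)"
      using colatitude[OF s] by (auto intro: sin_gt_zero)
    then have "deriv v s = 0"
      using clairaut[OF s] by simp
    then show ?thesis
      using v_diff[OF s] DERIV_deriv_iff_real_differentiable has_field_derivative_at_within
      by metis
  qed
  then obtain v0 where "\<And>s. s \<in> I \<Longrightarrow> v s = v0"
    using has_field_derivative_zero_constant[OF is_interval_convex[OF I(2)]] by blast
  then show ?thesis
    by (rule curvature_eq_0_if_longitude_const[OF I(1,3)]) (simp_all add: u_C2 I(3))
qed

lemma nonzero_continuous_on_interval_sign:
  fixes f :: "real \<Rightarrow> real"
  assumes "continuous_on J f" "is_interval J" "\<And>t. t \<in> J \<Longrightarrow> f t \<noteq> 0"
  obtains \<sigma> where "\<sigma> \<in> {-1, 1}" "\<And>t. t \<in> J \<Longrightarrow> \<sigma> * f t = \<bar>f t\<bar>"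
proof -
  have "(\<forall>t\<in>J. 0 < f t) \<or> (\<forall>t\<in>J. f t < 0)"
  proof (rule ccontr)
    assume "\<not> ?thesis"
    then obtain a b where ab: "a \<in> J" "b \<in> J" "f a \<le> 0" "0 \<le> f b"
      by (meson not_less)
    have "is_interval (f ` J)"
      using connected_continuous_image[OF assms(1)] assms(2) is_interval_connected_1 by blast
    moreover have "f a \<in> f ` J" "f b \<in> f ` J"
      using ab by auto
    ultimately have "0 \<in> f ` J"
      using ab(3,4) unfolding is_interval_1 by blast
    then show False using assms(3) by auto
  qed
  then show ?thesis
    using that[of 1] that[of "-1"] by (auto simp: abs_of_pos abs_of_neg)
qed

lemma inj_on_if_deriv_nonzero:
  fixes f :: "real \<Rightarrow> real"
  assumes "is_interval J"
    and "\<And>t. t \<in> J \<Longrightarrow> (f has_real_derivative f' t) (at t) \<and> f' t \<noteq> 0"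
  shows "inj_on f J"
proof -
  have no_repeat: "f a \<noteq> f b" if "a \<in> J" "b \<in> J" "a < b" for a b
  proof
    assume "f a = f b"
    have ab_sub: "{a..b} \<subseteq> J"
      using assms(1) that unfolding is_interval_1 by (meson atLeastAtMost_iff subsetI)
    have "continuous_on {a..b} f"
      using assms(2) ab_sub
      by (meson DERIV_isCont continuous_at_imp_continuous_on subsetD)
    moreover have "f differentiable (at x)" if "a < x" "x < b" for x
    proof -
      have "x \<in> J" using ab_sub that by auto
      then show ?thesis using assms(2) real_differentiable_def by blast
    qed
    ultimately obtain z where "a < z" "z < b" "(f has_real_derivative 0) (at z)"
      using Rolle[OF \<open>a < b\<close> \<open>f a = f b\<close>] by blast
    moreover have "z \<in> J" using ab_sub \<open>a < z\<close> \<open>z < b\<close> by auto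
    ultimately show False
      using assms(2) DERIV_unique by blast
  qed
  show ?thesis
    by (rule inj_onI) (metis linorder_neq_iff no_repeat)
qed

lemma has_real_derivative_inv_into:
  fixes f :: "real \<Rightarrow> real"
  assumes J: "open J" "is_interval J" "t \<in> J"
    and f': "\<And>s. s \<in> J \<Longrightarrow> (f has_real_derivative f' s) (at s) \<and> f' s \<noteq> 0"
  shows "(inv_into J f has_real_derivative 1 / f' t) (at (f t))"
proof -
  have "(inv_into J f has_derivative (*) (1 / f' t)) (at (f t))"
  proof (rule has_derivative_inverse_strong[OF J(1,3)])
    show "continuous_on J f"
      using f' by (meson DERIV_isCont continuous_at_imp_continuous_on)
    show "inv_into J f (f s) = s" if "s \<in> J" for s
      using inj_on_if_deriv_nonzero[OF J(2) f'] that by (simp add: inv_into_f_f)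
    show "(f has_derivative (*) (f' t)) (at t)"
      using f'[OF J(3)] by (simp add: has_field_derivative_def)
    show "(*) (f' t) \<circ> (*) (1 / f' t) = id"
      using f'[OF J(3)] by (auto simp: fun_eq_iff)
  qed
  then show ?thesis by (simp add: has_field_derivative_def)
qed

text \<open>Here p = u^alpha, S = sin u, d = u', e = v' at one parameter, and \<sigma> is the sign of d.\<close>
lemma clairaut_pointwise:
  fixes p S d e c0 \<sigma> :: real
  assumes "0 < p" "0 < S" "d \<noteq> 0" "\<sigma> \<in> {-1, 1}" "\<sigma> * d = \<bar>d\<bar>"
    and clairaut: "p * S\<^sup>2 * e = c0" and arclength: "d\<^sup>2 + S\<^sup>2 * e\<^sup>2 = 1"
  shows "\<bar>c0\<bar>\<^sup>2 < p\<^sup>2 * S\<^sup>2"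
    and "1 / d = \<sigma> * (p * S / sqrt (p\<^sup>2 * S\<^sup>2 - \<bar>c0\<bar>\<^sup>2))"
    and "e * (1 / d) = \<sigma> * sgn c0 * (\<bar>c0\<bar> / (S * sqrt (p\<^sup>2 * S\<^sup>2 - \<bar>c0\<bar>\<^sup>2)))"
proof -
  have "\<bar>c0\<bar>\<^sup>2 = p\<^sup>2 * S\<^sup>2 * (S\<^sup>2 * e\<^sup>2)"
    unfolding clairaut[symmetric] by (simp add: power2_eq_square)
  also have "\<dots> = p\<^sup>2 * S\<^sup>2 * (1 - d\<^sup>2)"
    using arclength by (metis add_diff_cancel_left')
  finally have discriminant: "p\<^sup>2 * S\<^sup>2 - \<bar>c0\<bar>\<^sup>2 = (p * S * d)\<^sup>2"
    by (simp add: algebra_simps power2_eq_square)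
  have "0 < (p * S * d)\<^sup>2"
    using assms(1-3) by simp
  then show "\<bar>c0\<bar>\<^sup>2 < p\<^sup>2 * S\<^sup>2"
    using discriminant by linarith
  have root: "sqrt (p\<^sup>2 * S\<^sup>2 - \<bar>c0\<bar>\<^sup>2) = p * S * \<bar>d\<bar>"
    unfolding discriminant using assms(1,2) by (simp add: abs_mult)
  have inverse_d: "1 / d = \<sigma> / \<bar>d\<bar>"
    using assms(3-5) by (auto simp: field_simps)
  then show "1 / d = \<sigma> * (p * S / sqrt (p\<^sup>2 * S\<^sup>2 - \<bar>c0\<bar>\<^sup>2))"
    unfolding root using assms(1,2) by simp
  have "e = sgn c0 * \<bar>c0\<bar> / (p * S\<^sup>2)"
    unfolding sgn_mult_abs clairaut[symmetric] using assms(1,2) by simp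
  with inverse_d show "e * (1 / d) = \<sigma> * sgn c0 * (\<bar>c0\<bar> / (S * sqrt (p\<^sup>2 * S\<^sup>2 - \<bar>c0\<bar>\<^sup>2)))"
    unfolding root by (simp add: power2_eq_square mult_ac)
qed

lemma clairaut_profile_on_monotone_piece:
  fixes u v :: "real \<Rightarrow> real"
  assumes J: "open J" "is_interval J"
    and u_deriv: "\<And>t. t \<in> J \<Longrightarrow> (u has_real_derivative deriv u t) (at t) \<and> deriv u t \<noteq> 0"
    and u'_cont: "continuous_on J (deriv u)"
    and v_diff: "\<And>t. t \<in> J \<Longrightarrow> v differentiable (at t)"
    and colatitude: "\<And>t. t \<in> J \<Longrightarrow> 0 < u t \<and> u t < pi"
    and arclength: "\<And>t. t \<in> J \<Longrightarrow> (deriv u t)\<^sup>2 + (sin (u t))\<^sup>2 * (deriv v t)\<^sup>2 = 1"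
    and clairaut: "\<And>t. t \<in> J \<Longrightarrow> u t powr \<alpha> * (sin (u t))\<^sup>2 * deriv v t = c0"
    and "c0 \<noteq> 0"
  shows "(\<forall>w\<in>u ` J. \<bar>c0\<bar>\<^sup>2 < (w powr \<alpha>)\<^sup>2 * (sin w)\<^sup>2) \<and>
    (\<exists>\<sigma>1 \<sigma>2. \<sigma>1 \<in> {-1, 1} \<and> \<sigma>2 \<in> {-1, 1} \<and>
      (\<forall>w\<in>u ` J.
         (inv_into J u has_real_derivative
            \<sigma>1 * (w powr \<alpha> * sin w / sqrt ((w powr \<alpha>)\<^sup>2 * (sin w)\<^sup>2 - \<bar>c0\<bar>\<^sup>2))) (at w)
       \<and> ((v \<circ> inv_into J u) has_real_derivative
            \<sigma>2 * (\<bar>c0\<bar> / (sin w * sqrt ((w powr \<alpha>)\<^sup>2 * (sin w)\<^sup>2 - \<bar>c0\<bar>\<^sup>2)))) (at w)))"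
proof -
  obtain \<sigma> where \<sigma>: "\<sigma> \<in> {-1, 1}" "\<And>t. t \<in> J \<Longrightarrow> \<sigma> * deriv u t = \<bar>deriv u t\<bar>"
    using nonzero_continuous_on_interval_sign[OF u'_cont J(2)] u_deriv by blast
  have pointwise:
    "\<bar>c0\<bar>\<^sup>2 < (u t powr \<alpha>)\<^sup>2 * (sin (u t))\<^sup>2"
    "1 / deriv u t = \<sigma> * (u t powr \<alpha> * sin (u t)
       / sqrt ((u t powr \<alpha>)\<^sup>2 * (sin (u t))\<^sup>2 - \<bar>c0\<bar>\<^sup>2))" (is "_ = ?inv_deriv t")
    "deriv v t * (1 / deriv u t) = \<sigma> * sgn c0 * (\<bar>c0\<bar> / (sin (u t)
       * sqrt ((u t powr \<alpha>)\<^sup>2 * (sin (u t))\<^sup>2 - \<bar>c0\<bar>\<^sup>2)))" (is "_ = ?chain_deriv t")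
    if t: "t \<in> J" for t
  proof -
    have "0 < u t powr \<alpha>" "0 < sin (u t)" "deriv u t \<noteq> 0"
      using colatitude[OF t] u_deriv[OF t] by (auto intro: sin_gt_zero)
    then show "\<bar>c0\<bar>\<^sup>2 < (u t powr \<alpha>)\<^sup>2 * (sin (u t))\<^sup>2" and "1 / deriv u t = ?inv_deriv t"
      and "deriv v t * (1 / deriv u t) = ?chain_deriv t"
      using clairaut_pointwise[OF _ _ _ \<sigma>(1) \<sigma>(2)[OF t] clairaut[OF t] arclength[OF t]] by blast+
  qed
  have inv_deriv: "(inv_into J u has_real_derivative 1 / deriv u t) (at (u t))" if t: "t \<in> J" for t
    using has_real_derivative_inv_into[OF J t u_deriv] .
  have chain_deriv:
    "((v \<circ> inv_into J u) has_real_derivative deriv v t * (1 / deriv u t)) (at (u t))"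
    if t: "t \<in> J" for t
  proof (rule DERIV_chain[OF _ inv_deriv[OF t]])
    have "inv_into J u (u t) = t"
      using inj_on_if_deriv_nonzero[OF J(2) u_deriv] t by (simp add: inv_into_f_f)
    then show "(v has_real_derivative deriv v t) (at (inv_into J u (u t)))"
      using v_diff[OF t] DERIV_deriv_iff_real_differentiable by simp
  qed
  have bound: "\<forall>w\<in>u ` J. \<bar>c0\<bar>\<^sup>2 < (w powr \<alpha>)\<^sup>2 * (sin w)\<^sup>2"
    using pointwise(1) by blast
  have derivs: "\<forall>w\<in>u ` J. (inv_into J u has_real_derivative
        \<sigma> * (w powr \<alpha> * sin w / sqrt ((w powr \<alpha>)\<^sup>2 * (sin w)\<^sup>2 - \<bar>c0\<bar>\<^sup>2))) (at w)
      \<and> ((v \<circ> inv_into J u) has_real_derivative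
        \<sigma> * sgn c0 * (\<bar>c0\<bar> / (sin w * sqrt ((w powr \<alpha>)\<^sup>2 * (sin w)\<^sup>2 - \<bar>c0\<bar>\<^sup>2)))) (at w)"
    using inv_deriv chain_deriv pointwise(2,3) by auto
  have sign_v: "\<sigma> * sgn c0 \<in> {-1, 1}"
    using \<sigma>(1) \<open>c0 \<noteq> 0\<close> by (auto simp: sgn_if)
  show ?thesis
    by (rule conjI[OF bound], rule exI[of _ \<sigma>], rule exI[of _ "\<sigma> * sgn c0"])
      (use \<sigma>(1) sign_v derivs in blast)
qed

theorem theorem3p6:
  fixes \<alpha> :: real and I :: "real set" and u v :: "real \<Rightarrow> real"
  assumes alpha_nz: "\<alpha> \<noteq> 0"
    and I_open: "open I" and I_interval: "is_interval I" and I_ne: "I \<noteq> {}"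
    and u_C2: "\<And>t. t \<in> I \<Longrightarrow> u differentiable (at t) \<and> deriv u differentiable (at t)"
    and v_C2: "\<And>t. t \<in> I \<Longrightarrow> v differentiable (at t) \<and> deriv v differentiable (at t)"
    and avoids_N: "\<And>t. t \<in> I \<Longrightarrow> 0 < u t \<and> u t < pi"
    and arclength: "\<And>t. t \<in> I \<Longrightarrow> (deriv u t)\<^sup>2 + (sin (u t))\<^sup>2 * (deriv v t)\<^sup>2 = 1"
    and stationary: "alpha_stationary \<alpha> I u v"
    and nonconst_curv: "\<not> (\<exists>k. \<forall>t\<in>I. curvature u v t = k)"
  shows "\<exists>c>0. \<forall>J. J \<subseteq> I \<longrightarrow> open J \<longrightarrow> is_interval J \<longrightarrow> J \<noteq> {}
            \<longrightarrow> (\<forall>t\<in>J. deriv u t \<noteq> 0) \<longrightarrow>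
           (\<forall>w\<in>u ` J. c\<^sup>2 < (w powr \<alpha>)\<^sup>2 * (sin w)\<^sup>2) \<and>
           (\<exists>\<sigma>1 \<sigma>2. \<sigma>1 \<in> {-1, 1} \<and> \<sigma>2 \<in> {-1, 1} \<and>
              (\<forall>w\<in>u ` J.
                 (inv_into J u has_real_derivative
                    \<sigma>1 * (w powr \<alpha> * sin w / sqrt ((w powr \<alpha>)\<^sup>2 * (sin w)\<^sup>2 - c\<^sup>2))) (at w)
               \<and> ((v \<circ> inv_into J u) has_real_derivative
                    \<sigma>2 * (c / (sin w * sqrt ((w powr \<alpha>)\<^sup>2 * (sin w)\<^sup>2 - c\<^sup>2)))) (at w)))"
proof -
  obtain c0 where clairaut: "\<And>s. s \<in> I \<Longrightarrow> u s powr \<alpha> * (sin (u s))\<^sup>2 * deriv v s = c0"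
    using alpha_stationary_first_integral[OF stationary I_interval] arclength
    by (metis speed_def real_sqrt_one div_by_1)
  have "c0 \<noteq> 0"
  proof
    assume "c0 = 0"
    then have "\<forall>t\<in>I. curvature u v t = 0"
      using curvature_eq_0_if_clairaut_constant_eq_0[OF I_open I_interval _ u_C2 _ avoids_N]
        v_C2 clairaut by blast
    with nonconst_curv show False by blast
  qed
  show ?thesis
  proof (intro exI[of _ "\<bar>c0\<bar>"] conjI[of "0 < \<bar>c0\<bar>"] allI impI
      clairaut_profile_on_monotone_piece)
    show "0 < \<bar>c0\<bar>" "c0 \<noteq> 0"
      using \<open>c0 \<noteq> 0\<close> by simp_all
    fix J assume J: "J \<subseteq> I" "open J" "is_interval J" "J \<noteq> {}"
      and u'_nz: "\<forall>t\<in>J. deriv u t \<noteq> 0"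
    show "open J" "is_interval J"
      by (fact J)+
    show "continuous_on J (deriv u)"
      using u_C2 J(1)
      by (meson continuous_at_imp_continuous_on differentiable_imp_continuous_within subsetD)
    fix t assume "t \<in> J"
    then have t: "t \<in> I"
      using J(1) by blast
    show "(u has_real_derivative deriv u t) (at t) \<and> deriv u t \<noteq> 0"
      using u_C2[OF t] u'_nz \<open>t \<in> J\<close> DERIV_deriv_iff_real_differentiable by blast
    show "v differentiable (at t)" "0 < u t \<and> u t < pi"
      "(deriv u t)\<^sup>2 + (sin (u t))\<^sup>2 * (deriv v t)\<^sup>2 = 1"
      "u t powr \<alpha> * (sin (u t))\<^sup>2 * deriv v t = c0"
      using v_C2[OF t] avoids_N[OF t] arclength[OF t] clairaut[OF t] by simp_all
  qed
qed

end
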